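(* Let $G$ be a simple connected graph with $n$ vertices and $m$ edges, let $k\ge 1$ be an integer, and let $S_k(G)$ be the $k$-parallel subdivision graph of $G$. Put $f_1(x)=\frac{2+\sqrt{4-2x}}{2}$ and $f_2(x)=\frac{2-\sqrt{4-2x}}{2}$. Then the eigenvalues of the normalized Laplacian $\mathscr{L}(S_k(G))$ are as follows. (i) If $\lambda\notin\{0,2\}$ is an eigenvalue of $\mathscr{L}(G)$, then $f_1(\lambda)$ and $f_2(\lambda)$ are eigenvalues of $\mathscr{L}(S_k(G))$, and each of them has the same multiplicity as $\lambda$ has in $\mathscr{L}(G)$. (ii) $0$ and $2$ are eigenvalues of $\mathscr{L}(S_k(G))$, each of multiplicity $1$. (iii) $1$ is an eigenvalue of $\mathscr{L}(S_k(G))$; its multiplicity is $km-n+2$ if $G$ is bipartite and $km-n$ otherwise.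
   Context: For a graph $H$ with adjacency matrix $A(H)$ and diagonal degree matrix $D(H)$ (no isolated vertices), the normalized Laplacian is $\mathscr{L}(H)=I-D(H)^{-1/2}A(H)D(H)^{-1/2}$, i.e. its $(i,i)$ entry is $1$, its $(i,j)$ entry is $-1/\sqrt{d(i)d(j)}$ if $i\sim j$, and $0$ otherwise. The $k$-parallel subdivision graph $S_k(G)$ is obtained from $G$ by replacing each edge $uv$ of $G$ by $k$ internally disjoint paths $u-w-v$ of length $2$ (each with its own new middle vertex $w$); thus $S_k(G)$ has $n+km$ vertices and $2km$ edges, each vertex $u\in V(G)$ has degree $k\,d_G(u)$ and each new vertex has degree $2$. *)

theory Defs
  imports "Jordan_Normal_Form.Char_Poly"
begin

definition simple_graph :: "'v set \<Rightarrow> ('v \<Rightarrow> 'v \<Rightarrow> bool) \<Rightarrow> bool" where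
  "simple_graph V E \<longleftrightarrow> finite V \<and>
     (\<forall>u v. E u v \<longrightarrow> u \<in> V \<and> v \<in> V \<and> u \<noteq> v \<and> E v u)"

definition connected_graph :: "'v set \<Rightarrow> ('v \<Rightarrow> 'v \<Rightarrow> bool) \<Rightarrow> bool" where
  "connected_graph V E \<longleftrightarrow> (\<forall>u\<in>V. \<forall>v\<in>V. E\<^sup>*\<^sup>* u v)"

definition bipartite_graph :: "'v set \<Rightarrow> ('v \<Rightarrow> 'v \<Rightarrow> bool) \<Rightarrow> bool" where
  "bipartite_graph V E \<longleftrightarrow> (\<exists>A \<subseteq> V. \<forall>u v. E u v \<longrightarrow> (u \<in> A \<longleftrightarrow> v \<notin> A))"

definition graph_edges :: "'v set \<Rightarrow> ('v \<Rightarrow> 'v \<Rightarrow> bool) \<Rightarrow> 'v set set" where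
  "graph_edges V E = {{u, v} | u v. u \<in> V \<and> v \<in> V \<and> E u v}"

definition degree :: "'v set \<Rightarrow> ('v \<Rightarrow> 'v \<Rightarrow> bool) \<Rightarrow> 'v \<Rightarrow> nat" where
  "degree V E u = card {v \<in> V. E u v}"

text \<open>An arbitrary fixed enumeration of the vertex set (spectra do not depend on it).\<close>
definition vertex_list :: "'v set \<Rightarrow> 'v list" where
  "vertex_list V = (SOME vs. distinct vs \<and> set vs = V)"

definition nlap_entry :: "'v set \<Rightarrow> ('v \<Rightarrow> 'v \<Rightarrow> bool) \<Rightarrow> 'v \<Rightarrow> 'v \<Rightarrow> real" where
  "nlap_entry V E x y =
     (if x = y then 1
      else if E x y then - 1 / sqrt (real (degree V E x) * real (degree V E y))
      else 0)"

definition norm_laplacian :: "'v set \<Rightarrow> ('v \<Rightarrow> 'v \<Rightarrow> bool) \<Rightarrow> real mat" where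
  "norm_laplacian V E =
     (let vs = vertex_list V
      in mat (length vs) (length vs) (\<lambda>(i, j). nlap_entry V E (vs ! i) (vs ! j)))"

definition eig_mult :: "real mat \<Rightarrow> real \<Rightarrow> nat" where
  "eig_mult M c = order c (char_poly M)"

text \<open>k-parallel subdivision: original vertices Inl u; new vertex Inr (e, i) is the
  middle vertex of the i-th path (1 \<le> i \<le> k) replacing edge e.\<close>
definition subdiv_vertices :: "nat \<Rightarrow> 'v set \<Rightarrow> ('v \<Rightarrow> 'v \<Rightarrow> bool) \<Rightarrow> ('v + 'v set \<times> nat) set" where
  "subdiv_vertices k V E = Inl ` V \<union> Inr ` (graph_edges V E \<times> {1..k})"

fun subdiv_adj :: "nat \<Rightarrow> 'v set \<Rightarrow> ('v \<Rightarrow> 'v \<Rightarrow> bool) \<Rightarrow>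
    ('v + 'v set \<times> nat) \<Rightarrow> ('v + 'v set \<times> nat) \<Rightarrow> bool" where
  "subdiv_adj k V E (Inl u) (Inr (e, i)) \<longleftrightarrow>
     u \<in> V \<and> e \<in> graph_edges V E \<and> u \<in> e \<and> i \<in> {1..k}"
| "subdiv_adj k V E (Inr (e, i)) (Inl u) \<longleftrightarrow>
     u \<in> V \<and> e \<in> graph_edges V E \<and> u \<in> e \<and> i \<in> {1..k}"
| "subdiv_adj k V E _ _ \<longleftrightarrow> False"

definition f1 :: "real \<Rightarrow> real" where "f1 x = (2 + sqrt (4 - 2 * x)) / 2"
definition f2 :: "real \<Rightarrow> real" where "f2 x = (2 - sqrt (4 - 2 * x)) / 2"

end

(* Order the vertices of S_k(G) as the original vertices followed by the new ones. Then
   L(S_k(G)) = [[I, -B], [-B^T, I]], and since two adjacent vertices of G share exactly k paths,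
   B B^T = I - L(G)/2. A Schur complement turns this into the identity
     char L(S_k(G)) (x) * (x - 1)^n = (x - 1)^(km) * (-1/2)^n * char L(G) (4x - 2x^2),
   so a root a of char L(S_k(G)) has the multiplicity of 4a - 2a^2 in char L(G), doubled at the
   critical point a = 1 of the substitution; f1 and f2 are the two preimages of an eigenvalue.
   The multiplicities of 0 and 2 in L(G) (1, and 1 or 0 according to bipartiteness) come from
   the quadratic form of L(G) together with the fact that a symmetric matrix has no eigenvalue
   whose algebraic multiplicity exceeds its geometric one. *)

theory Submission
  imports Defs "Jordan_Normal_Form.Schur_Decomposition"
begin

section \<open>Symmetric matrices and determinants\<close>

text \<open>Row analogue of corthogonal_col_ev_0; this is where the symmetry of A is used.\<close>

lemma corthogonal_row_ev_0_sym:
  fixes A :: "real mat"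
  assumes A: "A \<in> carrier_mat n n" and sym: "transpose_mat A = A"
    and w: "w \<in> carrier_vec n" and ew: "A *\<^sub>v w = a \<cdot>\<^sub>v w"
    and ws: "set ws \<subseteq> carrier_vec n" "corthogonal ws" "length ws = n" and ws0: "ws ! 0 = w"
    and j: "0 < j" "j < n"
  shows "(corthogonal_inv (mat_of_cols n ws) * A * mat_of_cols n ws) $$ (0, j) = 0"
proof -
  let ?W = "mat_of_cols n ws"
  let ?W' = "corthogonal_inv ?W"
  have W: "?W \<in> carrier_mat n n" using ws by auto
  have W': "?W' \<in> carrier_mat n n" using W by (auto simp: corthogonal_inv_def mat_of_rows_def)
  have wsj: "ws ! j \<in> carrier_vec n" using ws j by auto
  have "(?W' * A * ?W) $$ (0, j) = row ?W' 0 \<bullet> col (A * ?W) j"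
    by (subst assoc_mult_mat[OF W' A W], subst index_mult_mat) (use W W' A j in auto)
  also have "row ?W' 0 = (1 / (w \<bullet> w)) \<cdot>\<^sub>v w"
    using ws ws0 j w by (simp add: corthogonal_inv_def vec_inv_def)
  also have "col (A * ?W) j = A *\<^sub>v ws ! j"
    using A W j ws wsj by (auto simp: col_mat_of_cols)
  also have "((1 / (w \<bullet> w)) \<cdot>\<^sub>v w) \<bullet> (A *\<^sub>v ws ! j)
      = (1 / (w \<bullet> w)) * ((transpose_mat A *\<^sub>v w) \<bullet> ws ! j)"
    using w wsj A transpose_vec_mult_scalar[OF A wsj w] by simp
  also have "(transpose_mat A *\<^sub>v w) \<bullet> ws ! j = a * (ws ! 0 \<bullet>c ws ! j)"
    unfolding sym ew ws0 using w wsj by simp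
  also have "ws ! 0 \<bullet>c ws ! j = 0"
    using ws(2,3) j unfolding corthogonal_def by auto
  finally show ?thesis by simp
qed

lemma corthogonal_basis_extending:
  fixes w :: "real vec"
  assumes w: "w \<in> carrier_vec n" "w \<noteq> 0\<^sub>v n"
  obtains ws where "set ws \<subseteq> carrier_vec n" "corthogonal ws" "length ws = n" "ws ! 0 = w"
proof -
  interpret cof_vec_space n "TYPE(real)" .
  have n: "n \<noteq> 0" using w by (auto intro!: eq_vecI)
  define b where "b = basis_completion w"
  from basis_completion[OF w, folded b_def]
  have b: "set b \<subseteq> carrier_vec n" "distinct b" "\<not> lin_dep (set b)" "hd b = w" "length b = n"
    by auto
  with n obtain vs where bv: "b = w # vs" by (cases b) auto
  define ws where "ws = gram_schmidt n b"
  from gram_schmidt_result[OF b(1-3) refl, folded ws_def]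
  have ws: "set ws \<subseteq> carrier_vec n" "corthogonal ws" "length ws = n" by (auto simp: b(5))
  have "hd ws = w" using gram_schmidt_hd[OF w(1), of vs] unfolding ws_def bv .
  then have "ws ! 0 = w" using ws(3) n by (cases ws) auto
  with ws that show thesis by blast
qed

lemma sym_mat_deflation:
  fixes A :: "real mat"
  assumes A: "A \<in> carrier_mat n n" and sym: "transpose_mat A = A"
    and w: "w \<in> carrier_vec n" "w \<noteq> 0\<^sub>v n" and ew: "A *\<^sub>v w = a \<cdot>\<^sub>v w"
  obtains W W' A3 where "W \<in> carrier_mat n n" "W' \<in> carrier_mat n n"
    "W' * W = 1\<^sub>m n" "W * W' = 1\<^sub>m n" "col W 0 = w" "A3 \<in> carrier_mat (n - 1) (n - 1)"
    "W' * A * W = four_block_mat (mat 1 1 (\<lambda>_. a)) (0\<^sub>m 1 (n - 1)) (0\<^sub>m (n - 1) 1) A3"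
proof -
  have n: "n \<noteq> 0" using w by (auto intro!: eq_vecI)
  obtain ws where ws: "set ws \<subseteq> carrier_vec n" "corthogonal ws" "length ws = n" and ws0: "ws ! 0 = w"
    using corthogonal_basis_extending[OF w] by blast
  define W where "W = mat_of_cols n ws"
  define W' where "W' = corthogonal_inv W"
  define A' where "A' = W' * A * W"
  have W: "W \<in> carrier_mat n n" using ws unfolding W_def by auto
  have W': "W' \<in> carrier_mat n n"
    using W unfolding W'_def by (auto simp: corthogonal_inv_def mat_of_rows_def)
  have W'W: "W' * W = 1\<^sub>m n"
    using corthogonal_inv_result[OF orthogonal_mat_of_cols[OF ws]] W W'
    unfolding W'_def W_def inverts_mat_def by auto
  have WW': "W * W' = 1\<^sub>m n" using mat_mult_left_right_inverse[OF W' W W'W] .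
  have A': "A' \<in> carrier_mat n n" using W W' A unfolding A'_def by auto
  have hdws: "hd ws = w" using ws0 ws(3) n by (cases ws) auto
  have col0: "col A' 0 = vec n (\<lambda>i. if i = 0 then a else 0)"
    unfolding A'_def W'_def W_def using corthogonal_col_ev_0[OF A w ew n hdws ws] .
  have row0: "A' $$ (0, j) = 0" if "0 < j" "j < n" for j
    unfolding A'_def W'_def W_def using corthogonal_row_ev_0_sym[OF A sym w(1) ew ws ws0 that] .
  have colW: "col W 0 = w" using ws ws0 n w unfolding W_def by (subst col_mat_of_cols) auto
  let ?A3 = "mat (n - 1) (n - 1) (\<lambda>(i, j). A' $$ (Suc i, Suc j))"
  let ?F = "four_block_mat (mat 1 1 (\<lambda>_. a)) (0\<^sub>m 1 (n - 1)) (0\<^sub>m (n - 1) 1) ?A3"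
  have "A' = ?F"
  proof (rule eq_matI)
    fix i j assume "i < dim_row ?F" "j < dim_col ?F"
    then show "A' $$ (i, j) = ?F $$ (i, j)"
      using arg_cong[OF col0, of "\<lambda>v. v $ i"] row0[of j] A' n by (cases i; cases j) auto
  qed (use A' n in auto)
  then show thesis
    using that[OF W W' W'W WW' colW mat_carrier] unfolding A'_def by blast
qed

lemma not_eigenvalue_deflated_block:
  fixes A :: "real mat"
  assumes A: "A \<in> carrier_mat n n" and W: "W \<in> carrier_mat n n" and W': "W' \<in> carrier_mat n n"
    and W'W: "W' * W = 1\<^sub>m n" and WW': "W * W' = 1\<^sub>m n" and n: "0 < n"
    and A3: "A3 \<in> carrier_mat (n - 1) (n - 1)"
    and block: "W' * A * W = four_block_mat (mat 1 1 (\<lambda>_. a)) (0\<^sub>m 1 (n - 1)) (0\<^sub>m (n - 1) 1) A3"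
    and simple: "\<And>v. v \<in> carrier_vec n \<Longrightarrow> A *\<^sub>v v = a \<cdot>\<^sub>v v \<Longrightarrow> \<exists>c. v = c \<cdot>\<^sub>v col W 0"
  shows "\<not> eigenvalue A3 a"
proof
  assume "eigenvalue A3 a"
  then obtain u where u: "u \<in> carrier_vec (n - 1)" "u \<noteq> 0\<^sub>v (n - 1)" "A3 *\<^sub>v u = a \<cdot>\<^sub>v u"
    using A3 unfolding eigenvalue_def eigenvector_def by auto
  define u' where "u' = 0\<^sub>v 1 @\<^sub>v u"
  have "dim_vec u' = n" using u(1) n unfolding u'_def by simp
  then have u': "u' \<in> carrier_vec n" by (rule carrier_vecI)
  have "(W' * A * W) *\<^sub>v u' = mat 1 1 (\<lambda>_. a) *\<^sub>v 0\<^sub>v 1 @\<^sub>v A3 *\<^sub>v u"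
    unfolding block u'_def by (rule mult_mat_vec_split) (use u A3 in auto)
  also have "\<dots> = a \<cdot>\<^sub>v u'"
    unfolding u(3) u'_def by (rule eq_vecI) (use u(1) in \<open>auto simp: scalar_prod_def\<close>)
  finally have eu': "(W' * A * W) *\<^sub>v u' = a \<cdot>\<^sub>v u'" .
  have "W * (W' * A * W) = (W * W') * (A * W)"
    using W W' A by (simp add: assoc_mult_mat[of _ n n _ n _ n])
  then have "W * (W' * A * W) = A * W" using A W by (simp add: WW')
  then have "A *\<^sub>v (W *\<^sub>v u') = W *\<^sub>v ((W' * A * W) *\<^sub>v u')"
    using W W' A u' by (metis assoc_mult_mat_vec mult_carrier_mat)
  also have "\<dots> = a \<cdot>\<^sub>v (W *\<^sub>v u')" using W u' by (simp add: eu' mult_mat_vec)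
  finally obtain c where c: "W *\<^sub>v u' = c \<cdot>\<^sub>v col W 0"
    using simple W u' by (metis mult_mat_vec_carrier)
  have "u' = (W' * W) *\<^sub>v u'" using u' by (simp add: W'W)
  also have "\<dots> = W' *\<^sub>v (W *\<^sub>v u')" using W' W u' by (rule assoc_mult_mat_vec)
  also have "\<dots> = c \<cdot>\<^sub>v unit_vec n 0"
    using col_mult2[OF W' W n] W' W n by (simp add: c mult_mat_vec W'W)
  finally have u'c: "u' = c \<cdot>\<^sub>v unit_vec n 0" .
  have "u $ i = 0" if "i < n - 1" for i
    using arg_cong[OF u'c, of "\<lambda>v. v $ Suc i"] u(1) that unfolding u'_def by simp
  then have "u = 0\<^sub>v (n - 1)" using u(1) by (intro eq_vecI) auto
  with u show False by simp
qed

lemma char_poly_nonzero: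
  assumes "A \<in> carrier_mat n n"
  shows "char_poly A \<noteq> 0"
proof
  assume "char_poly A = 0"
  with degree_monic_char_poly[OF assms] show False by simp
qed

lemma order_char_poly_sym_eq_1:
  fixes A :: "real mat"
  assumes A: "A \<in> carrier_mat n n" and sym: "transpose_mat A = A"
    and w: "w \<in> carrier_vec n" "w \<noteq> 0\<^sub>v n" and ew: "A *\<^sub>v w = a \<cdot>\<^sub>v w"
    and simple: "\<And>v. v \<in> carrier_vec n \<Longrightarrow> A *\<^sub>v v = a \<cdot>\<^sub>v v \<Longrightarrow> \<exists>c. v = c \<cdot>\<^sub>v w"
  shows "Polynomial.order a (char_poly A) = 1"
proof -
  obtain W W' A3 where W: "W \<in> carrier_mat n n" and W': "W' \<in> carrier_mat n n"
    and W'W: "W' * W = 1\<^sub>m n" and WW': "W * W' = 1\<^sub>m n" and colW: "col W 0 = w"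
    and A3: "A3 \<in> carrier_mat (n - 1) (n - 1)"
    and block: "W' * A * W = four_block_mat (mat 1 1 (\<lambda>_. a)) (0\<^sub>m 1 (n - 1)) (0\<^sub>m (n - 1) 1) A3"
    using sym_mat_deflation[OF A sym w ew] by blast
  have n: "0 < n" using w by (auto intro!: eq_vecI)
  have "similar_mat (W' * A * W) A"
    unfolding similar_mat_def using similar_mat_witI[OF W'W WW' refl _ A W' W] W W' A
    by (meson mult_carrier_mat)
  then have "char_poly A = char_poly (W' * A * W)" by (simp add: char_poly_similar)
  also have "\<dots> = char_poly (mat 1 1 (\<lambda>_. a)) * char_poly A3"
    unfolding block by (rule char_poly_four_block_zeros_col) (use A3 in auto)
  also have "char_poly (mat 1 1 (\<lambda>_. a)) = [:-a, 1:]"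
    by (simp add: char_poly_defs det_def sign_def)
  finally have cp: "char_poly A = [:-a, 1:] * char_poly A3" .
  have "\<not> eigenvalue A3 a"
    using not_eigenvalue_deflated_block[OF A W W' W'W WW' n A3 block] simple unfolding colW .
  then have "Polynomial.order a (char_poly A3) = 0"
    using eigenvalue_root_char_poly[OF A3] order_root by blast
  moreover have "[:-a, 1:] * char_poly A3 \<noteq> 0"
    using char_poly_nonzero[OF A3] by (metis mult_eq_0_iff pCons_eq_0_iff zero_neq_one)
  ultimately show ?thesis unfolding cp by (subst order_mult) (auto simp: order_linear')
qed

lemma det_permute_rows_cols:
  fixes A :: "'a :: comm_ring_1 mat"
  assumes A: "A \<in> carrier_mat n n" and h: "h permutes {0..<n}"
  shows "det (mat n n (\<lambda>(i, j). A $$ (h i, h j))) = det A"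
proof -
  define P where "P = mat n n (\<lambda>(i, j). A $$ (h i, j))"
  have P: "P \<in> carrier_mat n n" unfolding P_def by simp
  have "det (mat n n (\<lambda>(i, j). A $$ (h i, h j)))
      = det (transpose_mat (mat n n (\<lambda>(i, j). A $$ (h i, h j))))"
    by (rule det_transpose[OF mat_carrier, symmetric])
  also have "transpose_mat (mat n n (\<lambda>(i, j). A $$ (h i, h j)))
      = mat n n (\<lambda>(i, j). transpose_mat P $$ (h i, j))"
    using permutes_in_image[OF h] by (intro eq_matI) (auto simp: P_def)
  also have "det \<dots> = signof h * det (transpose_mat P)"
    using P by (intro det_permute_rows h) simp
  also have "det (transpose_mat P) = signof h * det A"
    using det_transpose[OF P] det_permute_rows[OF A h] unfolding P_def by simp
  also have "signof h * (signof h * det A) = (signof h * signof h) * det A"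
    by (rule mult.assoc[symmetric])
  also have "signof h * signof h = (1 :: 'a)"
    by (simp add: of_int_mult[symmetric])
  finally show ?thesis by simp
qed

lemma det_mat_enumeration_invariant:
  fixes g :: "'b \<Rightarrow> 'b \<Rightarrow> 'a :: comm_ring_1"
  assumes "distinct xs" "distinct ys" "set xs = set ys"
  shows "det (mat (length xs) (length xs) (\<lambda>(i, j). g (xs ! i) (xs ! j)))
       = det (mat (length ys) (length ys) (\<lambda>(i, j). g (ys ! i) (ys ! j)))"
proof -
  have "mset xs = mset ys" using assms by (simp add: set_eq_iff_mset_eq_distinct)
  then obtain p where p: "p permutes {..<length ys}" "permute_list p ys = xs"
    by (rule mset_eq_permutation)
  have len: "length xs = length ys" using p(2) by auto
  have xs_nth: "xs ! i = ys ! p i" if "i < length ys" for i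
    using permute_list_nth[OF p(1) that] p(2) by simp
  have "mat (length xs) (length xs) (\<lambda>(i, j). g (xs ! i) (xs ! j))
      = mat (length ys) (length ys)
          (\<lambda>(i, j). mat (length ys) (length ys) (\<lambda>(i, j). g (ys ! i) (ys ! j)) $$ (p i, p j))"
    using permutes_in_image[OF p(1)] by (intro eq_matI) (auto simp: len xs_nth)
  then show ?thesis
    using det_permute_rows_cols[OF mat_carrier, of p] p(1) by (simp add: lessThan_atLeast0)
qed

lemma det_four_block_scalar_diag:
  fixes B :: "'a :: idom mat"
  assumes B: "B \<in> carrier_mat n p"
  shows "det (four_block_mat (t \<cdot>\<^sub>m 1\<^sub>m n) B (transpose_mat B) (t \<cdot>\<^sub>m 1\<^sub>m p)) * t ^ n
       = det ((t * t) \<cdot>\<^sub>m 1\<^sub>m n - B * transpose_mat B) * t ^ p"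
proof -
  let ?M = "four_block_mat (t \<cdot>\<^sub>m 1\<^sub>m n) B (transpose_mat B) (t \<cdot>\<^sub>m 1\<^sub>m p)"
  \<comment> \<open>right multiplication by ?N clears the lower left block of ?M\<close>
  let ?N = "four_block_mat (t \<cdot>\<^sub>m 1\<^sub>m n) (0\<^sub>m n p) (- transpose_mat B) (1\<^sub>m p)"
  have M: "?M \<in> carrier_mat (n + p) (n + p)" and N: "?N \<in> carrier_mat (n + p) (n + p)"
    using B by auto
  have "det ?N = t ^ n"
    using B by (subst det_four_block_mat_upper_right_zero[of _ n _ p]) auto
  then have "det ?M * t ^ n = det ?M * det ?N" by simp
  also have "\<dots> = det (?M * ?N)" by (rule det_mult[OF M N, symmetric])
  also have "?M * ?N = four_block_mat ((t * t) \<cdot>\<^sub>m 1\<^sub>m n - B * transpose_mat B) B (0\<^sub>m p n) (t \<cdot>\<^sub>m 1\<^sub>m p)"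
    using B by (subst mult_four_block_mat) (auto intro!: eq_matI simp: scalar_prod_def mult.assoc
      sum.If_cases if_distribR if_distrib[of "(*)"] if_distrib[of "(*) t"] if_distrib[of "(*) (B $$ _)"])
  also have "det \<dots> = det ((t * t) \<cdot>\<^sub>m 1\<^sub>m n - B * transpose_mat B) * t ^ p"
    using B by (subst det_four_block_mat_lower_left_zero[of _ n _ p]) auto
  finally show ?thesis .
qed

lemma poly_char_poly_eq_det:
  fixes A :: "'a :: field mat"
  assumes A: "A \<in> carrier_mat n n"
  shows "poly (char_poly A) x = det (x \<cdot>\<^sub>m 1\<^sub>m n - A)"
proof -
  have "- char_matrix A x = x \<cdot>\<^sub>m 1\<^sub>m n - A"
    using A by (intro eq_matI) (auto simp: char_matrix_def)
  then show ?thesis using char_poly_matrix[OF A] by simp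
qed

lemma eigenvalue_iff_eig_mult_pos:
  fixes A :: "real mat"
  assumes "A \<in> carrier_mat n n"
  shows "eigenvalue A a \<longleftrightarrow> 0 < eig_mult A a"
  unfolding eig_mult_def eigenvalue_root_char_poly[OF assms]
  using order_gt_0_iff[OF char_poly_nonzero[OF assms]] by simp

section \<open>Roots of composed polynomials\<close>

lemma order_power:
  fixes p :: "'a :: idom poly"
  assumes "p \<noteq> 0"
  shows "Polynomial.order a (p ^ r) = r * Polynomial.order a p"
  using assms by (induct r) (simp_all add: order_mult)

lemma pcompose_power_left:
  fixes p q :: "'a :: comm_semiring_1 poly"
  shows "(p ^ r) \<circ>\<^sub>p q = (p \<circ>\<^sub>p q) ^ r"
  by (induct r) (simp_all add: pcompose_mult one_pCons)

lemma order_pcompose: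
  fixes p q :: "'a :: idom poly"
  assumes p: "p \<noteq> 0" and q: "Polynomial.degree q > 0"
  shows "Polynomial.order a (p \<circ>\<^sub>p q)
       = Polynomial.order (poly q a) p * Polynomial.order a (q - [:poly q a:])"
proof -
  define b where "b = poly q a"
  define r where "r = Polynomial.order b p"
  obtain h where ph: "p = [:-b, 1:] ^ r * h" and h: "\<not> [:-b, 1:] dvd h"
    using order_decomp[OF p] unfolding r_def by blast
  have "h \<noteq> 0" using ph p by auto
  then have hq: "h \<circ>\<^sub>p q \<noteq> 0" using pcompose_eq_0_iff[OF q] by simp
  have qb: "q - [:b:] \<noteq> 0" using q by auto
  have "[:-b, 1:] \<circ>\<^sub>p q = q - [:b:]" by (simp add: pcompose_pCons)
  then have pq: "p \<circ>\<^sub>p q = (q - [:b:]) ^ r * (h \<circ>\<^sub>p q)"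
    by (subst ph) (simp only: pcompose_mult pcompose_power_left)
  have "poly (h \<circ>\<^sub>p q) a \<noteq> 0"
    using h by (simp add: poly_pcompose b_def[symmetric] poly_eq_0_iff_dvd)
  then have "Polynomial.order a (h \<circ>\<^sub>p q) = 0" by (rule order_0I)
  then have "Polynomial.order a (p \<circ>\<^sub>p q) = Polynomial.order a ((q - [:b:]) ^ r)"
    unfolding pq using hq qb by (subst order_mult) auto
  also have "\<dots> = r * Polynomial.order a (q - [:b:])" by (rule order_power[OF qb])
  finally show ?thesis by (simp add: b_def r_def)
qed

lemma order_quadratic_minus_value:
  fixes a :: real
  shows "Polynomial.order a ([:0, 4, -2:] - [:poly [:0, 4, -2:] a:]) = (if a = 1 then 2 else 1)"
proof -
  have "[:0, 4, -2:] - [:poly [:0, 4, -2:] a:] = Polynomial.smult (-2) ([:-a, 1:] * [:-(2 - a), 1:])"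
    by (simp add: algebra_simps)
  then have "Polynomial.order a ([:0, 4, -2:] - [:poly [:0, 4, -2:] a:])
      = Polynomial.order a ([:-a, 1:] * [:-(2 - a), 1:])"
    by (simp only: order_smult[of "-2"])
  also have "\<dots> = Polynomial.order a [:-a, 1:] + Polynomial.order a [:-(2 - a), 1:]"
    by (rule order_mult) simp
  finally show ?thesis by (simp add: order_linear')
qed

section \<open>Normalized Laplacians of graphs on an index set\<close>

definition idx_nbrs :: "nat \<Rightarrow> (nat \<Rightarrow> nat \<Rightarrow> bool) \<Rightarrow> nat \<Rightarrow> nat set" where
  "idx_nbrs n R i = {j. j < n \<and> R i j}"

definition idx_deg :: "nat \<Rightarrow> (nat \<Rightarrow> nat \<Rightarrow> bool) \<Rightarrow> nat \<Rightarrow> nat" where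
  "idx_deg n R i = card (idx_nbrs n R i)"

definition idx_nlap :: "nat \<Rightarrow> (nat \<Rightarrow> nat \<Rightarrow> bool) \<Rightarrow> real mat" where
  "idx_nlap n R = mat n n (\<lambda>(i, j).
     if i = j then 1
     else if R i j then - 1 / sqrt (real (idx_deg n R i) * real (idx_deg n R j))
     else 0)"

lemma idx_nlap_carrier [simp]: "idx_nlap n R \<in> carrier_mat n n"
  and idx_nlap_dim [simp]: "dim_row (idx_nlap n R) = n" "dim_col (idx_nlap n R) = n"
  unfolding idx_nlap_def by simp_all

locale index_graph =
  fixes n :: nat and R :: "nat \<Rightarrow> nat \<Rightarrow> bool"
  assumes adj_sym: "R i j \<Longrightarrow> R j i"
    and adj_irrefl: "\<not> R i i"
    and adj_bounded: "R i j \<Longrightarrow> i < n \<and> j < n"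
    and deg_pos: "i < n \<Longrightarrow> 0 < idx_deg n R i"
begin

abbreviation nbrs :: "nat \<Rightarrow> nat set" where "nbrs \<equiv> idx_nbrs n R"

abbreviation dg :: "nat \<Rightarrow> real" where "dg i \<equiv> real (idx_deg n R i)"

abbreviation L :: "real mat" where "L \<equiv> idx_nlap n R"

definition scaled :: "real vec \<Rightarrow> nat \<Rightarrow> real" where
  "scaled x i = x $ i / sqrt (dg i)"

lemma idx_nlap_transpose: "transpose_mat L = L"
  unfolding idx_nlap_def by (rule eq_matI) (auto simp: adj_sym mult.commute)

lemma idx_nlap_mult_vec_nth:
  assumes x: "x \<in> carrier_vec n" and i: "i < n"
  shows "(L *\<^sub>v x) $ i = x $ i - (\<Sum>j\<in>nbrs i. x $ j / sqrt (dg i * dg j))"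
proof -
  have "(L *\<^sub>v x) $ i
      = (\<Sum>j<n. (if i = j then 1 else if R i j then - 1 / sqrt (dg i * dg j) else 0) * x $ j)"
    using x i by (simp add: idx_nlap_def scalar_prod_def lessThan_atLeast0)
  also have "\<dots> = (\<Sum>j<n. (if i = j then x $ j else 0)
      + (if R i j then - (x $ j / sqrt (dg i * dg j)) else 0))"
    by (rule sum.cong) (auto simp: adj_irrefl)
  also have "\<dots> = x $ i - (\<Sum>j\<in>nbrs i. x $ j / sqrt (dg i * dg j))"
    using i by (simp add: sum.distrib sum.If_cases idx_nbrs_def sum_negf Collect_conj_eq lessThan_def)
  finally show ?thesis .
qed

lemma idx_nlap_eigen_iff:
  assumes x: "x \<in> carrier_vec n"
  shows "L *\<^sub>v x = lam \<cdot>\<^sub>v x \<longleftrightarrow>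
    (\<forall>i<n. (1 - lam) * dg i * scaled x i = (\<Sum>j\<in>nbrs i. scaled x j))"
proof -
  have "(L *\<^sub>v x) $ i = lam * x $ i \<longleftrightarrow> (1 - lam) * dg i * scaled x i = (\<Sum>j\<in>nbrs i. scaled x j)"
    if i: "i < n" for i
  proof -
    define S where "S = (\<Sum>j\<in>nbrs i. scaled x j)"
    have di: "sqrt (dg i) > 0" using deg_pos[OF i] by simp
    have "(\<Sum>j\<in>nbrs i. x $ j / sqrt (dg i * dg j)) = S / sqrt (dg i)"
      by (simp add: S_def scaled_def sum_divide_distrib real_sqrt_mult ac_simps)
    then have "(L *\<^sub>v x) $ i = lam * x $ i \<longleftrightarrow> (1 - lam) * x $ i = S / sqrt (dg i)"
      using idx_nlap_mult_vec_nth[OF x i] by (auto simp: algebra_simps)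
    also have "\<dots> \<longleftrightarrow> sqrt (dg i) * ((1 - lam) * x $ i) = S"
      using di by (auto simp: eq_divide_eq ac_simps)
    also have "sqrt (dg i) * ((1 - lam) * x $ i) = (1 - lam) * dg i * scaled x i"
      using di by (simp add: scaled_def field_simps)
    finally show ?thesis unfolding S_def .
  qed
  then show ?thesis
    using x by (auto simp: vec_eq_iff)
qed

lemma sum_nbrs_swap: "(\<Sum>i<n. \<Sum>j\<in>nbrs i. f j) = (\<Sum>j<n. dg j * f j)"
proof -
  have "(\<Sum>i<n. \<Sum>j\<in>nbrs i. f j) = (\<Sum>i<n. \<Sum>j<n. if R i j then f j else 0)"
    by (simp add: idx_nbrs_def sum.If_cases Collect_conj_eq lessThan_def Int_commute)
  also have "\<dots> = (\<Sum>j<n. \<Sum>i<n. if R j i then f j else 0)"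
    by (subst sum.swap) (intro sum.cong refl, auto dest: adj_sym)
  also have "\<dots> = (\<Sum>j<n. dg j * f j)"
    by (simp add: idx_deg_def idx_nbrs_def sum.If_cases Collect_conj_eq lessThan_def Int_commute)
  finally show ?thesis .
qed

lemma sum_edges_square:
  fixes y :: "nat \<Rightarrow> real"
  assumes harm: "\<forall>i<n. c * dg i * y i = (\<Sum>j\<in>nbrs i. y j)" and s: "s\<^sup>2 = 1"
  shows "(\<Sum>i<n. \<Sum>j\<in>nbrs i. (y i + s * y j)\<^sup>2) = 2 * (1 + s * c) * (\<Sum>i<n. dg i * (y i)\<^sup>2)"
proof -
  have "(\<Sum>i<n. \<Sum>j\<in>nbrs i. y i * y j) = (\<Sum>i<n. y i * (\<Sum>j\<in>nbrs i. y j))"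
    by (simp add: sum_distrib_left)
  also have "\<dots> = (\<Sum>i<n. y i * (c * dg i * y i))" using harm by simp
  also have "\<dots> = c * (\<Sum>i<n. dg i * (y i)\<^sup>2)"
    by (simp add: sum_distrib_left power2_eq_square ac_simps)
  finally have cross: "(\<Sum>i<n. \<Sum>j\<in>nbrs i. y i * y j) = c * (\<Sum>i<n. dg i * (y i)\<^sup>2)" .
  have square: "(a + s * b)\<^sup>2 = a\<^sup>2 + b\<^sup>2 + 2 * s * (a * b)" for a b :: real
    using s by (simp add: power2_sum power_mult_distrib)
  have "(\<Sum>i<n. \<Sum>j\<in>nbrs i. (y i + s * y j)\<^sup>2)
      = (\<Sum>i<n. \<Sum>j\<in>nbrs i. (y i)\<^sup>2) + (\<Sum>i<n. \<Sum>j\<in>nbrs i. (y j)\<^sup>2)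
        + 2 * s * (\<Sum>i<n. \<Sum>j\<in>nbrs i. y i * y j)"
    unfolding square by (simp add: sum.distrib sum_distrib_left)
  also have "(\<Sum>i<n. \<Sum>j\<in>nbrs i. (y i)\<^sup>2) = (\<Sum>i<n. dg i * (y i)\<^sup>2)"
    by (simp add: idx_deg_def)
  also have "(\<Sum>i<n. \<Sum>j\<in>nbrs i. (y j)\<^sup>2) = (\<Sum>i<n. dg i * (y i)\<^sup>2)"
    by (rule sum_nbrs_swap)
  finally show ?thesis unfolding cross by (simp add: algebra_simps)
qed

lemma sum_edges_squares_eq_0_imp:
  fixes g :: "nat \<Rightarrow> nat \<Rightarrow> real"
  assumes "(\<Sum>i<n. \<Sum>j\<in>nbrs i. (g i j)\<^sup>2) = 0" and "R i j"
  shows "g i j = 0"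
proof -
  have ij: "i < n" "j \<in> nbrs i" using adj_bounded[OF assms(2)] assms(2) by (auto simp: idx_nbrs_def)
  have "(\<Sum>j\<in>nbrs i. (g i j)\<^sup>2) = 0"
    using assms(1) ij(1)
    by (subst (asm) sum_nonneg_eq_0_iff) (auto intro: sum_nonneg simp: idx_nbrs_def)
  then have "(g i j)\<^sup>2 = 0"
    using ij(2) by (subst (asm) sum_nonneg_eq_0_iff) (auto simp: idx_nbrs_def)
  then show ?thesis by simp
qed

lemma scaled_nonzero_entry:
  assumes "x \<in> carrier_vec n" "x \<noteq> 0\<^sub>v n"
  obtains i where "i < n" "scaled x i \<noteq> 0"
proof -
  obtain i where "i < n" "x $ i \<noteq> 0" using assms by (auto simp: vec_eq_iff)
  then show thesis using that deg_pos by (auto simp: scaled_def)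
qed

lemma eigenvalue_le_2:
  assumes "eigenvalue L lam"
  shows "lam \<le> 2"
proof -
  obtain x where x: "x \<in> carrier_vec n" "x \<noteq> 0\<^sub>v n" and e: "L *\<^sub>v x = lam \<cdot>\<^sub>v x"
    using assms unfolding eigenvalue_def eigenvector_def by auto
  obtain i where i: "i < n" "scaled x i \<noteq> 0" using scaled_nonzero_entry[OF x] .
  have pos: "0 < (\<Sum>i<n. dg i * (scaled x i)\<^sup>2)"
    using i deg_pos by (intro sum_pos2[of _ i]) auto
  have "0 \<le> (\<Sum>i<n. \<Sum>j\<in>nbrs i. (scaled x i + 1 * scaled x j)\<^sup>2)"
    by (intro sum_nonneg) auto
  also have "\<dots> = (4 - 2 * lam) * (\<Sum>i<n. dg i * (scaled x i)\<^sup>2)"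
    using sum_edges_square[of "1 - lam" "scaled x" 1] e idx_nlap_eigen_iff[OF x(1)] by simp
  finally show ?thesis using pos by (simp add: zero_le_mult_iff)
qed

lemma eigenvector_0_2_edge:
  assumes x: "x \<in> carrier_vec n" and e: "L *\<^sub>v x = lam \<cdot>\<^sub>v x"
    and lam: "lam = 0 \<or> lam = 2" and r: "R i j"
  shows "scaled x i = (1 - lam) * scaled x j"
proof -
  have "(lam - 1)\<^sup>2 = 1" using lam by auto
  moreover have "1 + (lam - 1) * (1 - lam) = 0" using lam by auto
  ultimately have "(\<Sum>i<n. \<Sum>j\<in>nbrs i. (scaled x i + (lam - 1) * scaled x j)\<^sup>2) = 0"
    using sum_edges_square[of "1 - lam" "scaled x" "lam - 1"] e idx_nlap_eigen_iff[OF x] by simp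
  from sum_edges_squares_eq_0_imp[OF this r] show ?thesis by (simp add: algebra_simps)
qed

end

locale connected_index_graph = index_graph +
  assumes nonempty: "0 < n"
    and connected: "\<And>i j. i < n \<Longrightarrow> j < n \<Longrightarrow> R\<^sup>*\<^sup>* i j"
begin

lemma constant_along_edges:
  assumes "\<And>i j. R i j \<Longrightarrow> g i = g j" and "i < n"
  shows "g i = g 0"
  using connected[OF assms(2) nonempty]
  by (induct rule: rtranclp_induct) (auto dest: assms(1))

lemma order_char_poly_idx_nlap_eq_1:
  assumes lam: "lam = 0 \<or> lam = 2"
    and s: "\<And>i. i < n \<Longrightarrow> s i \<noteq> 0" and s_edge: "\<And>i j. R i j \<Longrightarrow> s i = (1 - lam) * s j"
  shows "Polynomial.order lam (char_poly L) = 1"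
proof (rule order_char_poly_sym_eq_1[OF idx_nlap_carrier idx_nlap_transpose])
  define w where "w = vec n (\<lambda>i. s i * sqrt (dg i))"
  have sq: "(1 - lam) * (1 - lam) = 1" using lam by auto
  have scaled_w: "scaled w i = s i" if "i < n" for i
    using that deg_pos[OF that] by (simp add: w_def scaled_def)
  show w: "w \<in> carrier_vec n" unfolding w_def by simp
  show "w \<noteq> 0\<^sub>v n"
    using nonempty s[OF nonempty] deg_pos[OF nonempty] by (auto simp: w_def vec_eq_iff)
  show "L *\<^sub>v w = lam \<cdot>\<^sub>v w"
    unfolding idx_nlap_eigen_iff[OF w]
  proof (intro allI impI)
    fix i assume i: "i < n"
    have "(\<Sum>j\<in>nbrs i. scaled w j) = (\<Sum>j\<in>nbrs i. (1 - lam) * s i)"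
      using s_edge[OF adj_sym] sq by (intro sum.cong) (auto simp: idx_nbrs_def scaled_w)
    then show "(1 - lam) * dg i * scaled w i = (\<Sum>j\<in>nbrs i. scaled w j)"
      using i by (simp add: idx_deg_def scaled_w)
  qed
  show "\<exists>c. v = c \<cdot>\<^sub>v w" if v: "v \<in> carrier_vec n" and ev: "L *\<^sub>v v = lam \<cdot>\<^sub>v v" for v
  proof
    define c where "c = scaled v 0 / s 0"
    have nz: "1 - lam \<noteq> 0" using lam by auto
    have "scaled v i / s i = scaled v j / s j" if r: "R i j" for i j
      by (simp only: eigenvector_0_2_edge[OF v ev lam r] s_edge[OF r]
          mult_divide_mult_cancel_left[OF nz])
    then have const: "scaled v i / s i = c" if "i < n" for i
      unfolding c_def using constant_along_edges[of "\<lambda>i. scaled v i / s i"] that by blast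
    have "v $ i = c * (s i * sqrt (dg i))" if "i < n" for i
      using const[OF that] s[OF that] deg_pos[OF that] by (simp add: scaled_def field_simps)
    then show "v = c \<cdot>\<^sub>v w"
      using v by (intro eq_vecI) (auto simp: w_def)
  qed
qed

lemma order_char_poly_idx_nlap_0: "Polynomial.order 0 (char_poly L) = 1"
  by (rule order_char_poly_idx_nlap_eq_1[of 0 "\<lambda>_. 1"]) auto

lemma order_char_poly_idx_nlap_2:
  "Polynomial.order 2 (char_poly L) = (if \<exists>S. \<forall>i j. R i j \<longrightarrow> (i \<in> S \<longleftrightarrow> j \<notin> S) then 1 else 0)"
proof (cases "\<exists>S. \<forall>i j. R i j \<longrightarrow> (i \<in> S \<longleftrightarrow> j \<notin> S)")
  case True
  then obtain S where S: "\<And>i j. R i j \<Longrightarrow> i \<in> S \<longleftrightarrow> j \<notin> S" by blast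
  have "Polynomial.order 2 (char_poly L) = 1"
    by (rule order_char_poly_idx_nlap_eq_1[of 2 "\<lambda>i. if i \<in> S then 1 else -1"]) (auto dest: S)
  then show ?thesis using True by simp
next
  case False
  have "\<not> eigenvalue L 2"
  proof
    assume "eigenvalue L 2"
    then obtain x where x: "x \<in> carrier_vec n" "x \<noteq> 0\<^sub>v n" and e: "L *\<^sub>v x = 2 \<cdot>\<^sub>v x"
      unfolding eigenvalue_def eigenvector_def by auto
    have edge: "scaled x i = - scaled x j" if "R i j" for i j
      using eigenvector_0_2_edge[OF x(1) e _ that] by simp
    obtain i0 where i0: "i0 < n" "scaled x i0 \<noteq> 0" using scaled_nonzero_entry[OF x] .
    have abs_eq: "\<bar>scaled x i\<bar> = \<bar>scaled x 0\<bar>" if "i < n" for i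
      using constant_along_edges[of "\<lambda>i. \<bar>scaled x i\<bar>", OF _ that] edge by simp
    have nz: "scaled x i \<noteq> 0" if "i < n" for i
      using abs_eq[OF that] abs_eq[OF i0(1)] i0(2) by auto
    have "\<forall>i j. R i j \<longrightarrow> (i \<in> {i. 0 < scaled x i} \<longleftrightarrow> j \<notin> {i. 0 < scaled x i})"
    proof (intro allI impI)
      fix i j assume r: "R i j"
      then have "scaled x i \<noteq> 0" using nz adj_bounded by blast
      with edge[OF r] show "i \<in> {i. 0 < scaled x i} \<longleftrightarrow> j \<notin> {i. 0 < scaled x i}" by auto
    qed
    with False show False by blast
  qed
  then have "Polynomial.order 2 (char_poly L) = 0"
    by (intro order_0I) (simp add: eigenvalue_root_char_poly[OF idx_nlap_carrier, symmetric])
  then show ?thesis using False by simp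
qed

end

section \<open>Simple graphs\<close>

definition enum_adj :: "'v set \<Rightarrow> ('v \<Rightarrow> 'v \<Rightarrow> bool) \<Rightarrow> nat \<Rightarrow> nat \<Rightarrow> bool" where
  "enum_adj V E i j \<longleftrightarrow> i < card V \<and> j < card V \<and> E (vertex_list V ! i) (vertex_list V ! j)"

lemma norm_laplacian_carrier:
  "norm_laplacian V E \<in> carrier_mat (length (vertex_list V)) (length (vertex_list V))"
  unfolding norm_laplacian_def Let_def by simp

lemma vertex_list:
  assumes "finite V"
  shows "distinct (vertex_list V)" "set (vertex_list V) = V" "length (vertex_list V) = card V"
proof -
  obtain xs where "distinct xs \<and> set xs = V" using finite_distinct_list[OF assms] by blast
  then have "distinct (vertex_list V) \<and> set (vertex_list V) = V"
    unfolding vertex_list_def by (rule someI)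
  then show "distinct (vertex_list V)" "set (vertex_list V) = V" "length (vertex_list V) = card V"
    using distinct_card by fastforce+
qed

locale fin_simple_graph =
  fixes V :: "'v set" and E :: "'v \<Rightarrow> 'v \<Rightarrow> bool"
  assumes simple: "simple_graph V E"
begin

lemma finite_vertices: "finite V"
  using simple unfolding simple_graph_def by blast

lemma adj_simple: "E u v \<Longrightarrow> u \<in> V \<and> v \<in> V \<and> u \<noteq> v \<and> E v u"
  using simple unfolding simple_graph_def by blast

lemma vertex_list_nth_in [simp]: "i < card V \<Longrightarrow> vertex_list V ! i \<in> V"
  using vertex_list[OF finite_vertices] nth_mem by metis

lemma vertex_list_nth_eq_iff:
  "i < card V \<Longrightarrow> j < card V \<Longrightarrow> vertex_list V ! i = vertex_list V ! j \<longleftrightarrow> i = j"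
  using vertex_list[OF finite_vertices] nth_eq_iff_index_eq by metis

lemma vertex_list_surj: "u \<in> V \<Longrightarrow> \<exists>i < card V. vertex_list V ! i = u"
  using vertex_list[OF finite_vertices] in_set_conv_nth by metis

lemma idx_deg_enum_adj:
  assumes i: "i < card V"
  shows "idx_deg (card V) (enum_adj V E) i = degree V E (vertex_list V ! i)"
proof -
  have "{v \<in> V. E (vertex_list V ! i) v} = (!) (vertex_list V) ` idx_nbrs (card V) (enum_adj V E) i"
    using vertex_list_surj adj_simple i by (force simp: idx_nbrs_def enum_adj_def)
  moreover have "inj_on ((!) (vertex_list V)) (idx_nbrs (card V) (enum_adj V E) i)"
    by (auto simp: inj_on_def idx_nbrs_def vertex_list_nth_eq_iff)
  ultimately show ?thesis
    unfolding idx_deg_def degree_def by (simp add: card_image)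
qed

lemma norm_laplacian_eq_idx_nlap: "norm_laplacian V E = idx_nlap (card V) (enum_adj V E)"
  unfolding norm_laplacian_def idx_nlap_def Let_def vertex_list(3)[OF finite_vertices]
  by (rule eq_matI) (auto simp: nlap_entry_def enum_adj_def idx_deg_enum_adj vertex_list_nth_eq_iff)

lemma index_graph_enum_adj:
  assumes "\<And>u. u \<in> V \<Longrightarrow> 0 < degree V E u"
  shows "index_graph (card V) (enum_adj V E)"
  by unfold_locales
    (auto simp: enum_adj_def idx_deg_enum_adj assms dest: adj_simple)

lemma degree_pos_if_connected:
  assumes "connected_graph V E" and "2 \<le> card V" and u: "u \<in> V"
  shows "0 < degree V E u"
proof -
  obtain v where v: "v \<in> V" "v \<noteq> u"
    using assms(2) u by (metis card_le_Suc0_iff_eq finite_vertices not_less_eq_eq numeral_2_eq_2)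
  then have "E\<^sup>*\<^sup>* u v" using assms(1) u unfolding connected_graph_def by blast
  then obtain w where "E u w" using v(2) by (metis converse_rtranclpE)
  then have "w \<in> {w \<in> V. E u w}" using adj_simple by blast
  then show ?thesis unfolding degree_def using finite_vertices by (auto simp: card_gt_0_iff)
qed

lemma enum_adj_connected:
  assumes conn: "connected_graph V E" and ij: "i < card V" "j < card V"
  shows "(enum_adj V E)\<^sup>*\<^sup>* i j"
proof -
  let ?vs = "vertex_list V"
  have "E\<^sup>*\<^sup>* u v \<Longrightarrow> ?vs ! i = u \<Longrightarrow> \<exists>j < card V. ?vs ! j = v \<and> (enum_adj V E)\<^sup>*\<^sup>* i j" for u v
  proof (induct rule: rtranclp_induct)
    case (step v w)
    then obtain j where j: "j < card V" "?vs ! j = v" "(enum_adj V E)\<^sup>*\<^sup>* i j" by blast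
    obtain l where l: "l < card V" "?vs ! l = w"
      using vertex_list_surj adj_simple[OF step(2)] by blast
    have "enum_adj V E j l" using j l step(2) by (simp add: enum_adj_def)
    then show ?case using j l by (blast intro: rtranclp.rtrancl_into_rtrancl)
  qed (use ij in blast)
  moreover have "E\<^sup>*\<^sup>* (?vs ! i) (?vs ! j)" using conn ij unfolding connected_graph_def by simp
  ultimately show ?thesis using ij vertex_list_nth_eq_iff by blast
qed

lemma bipartite_graph_iff_enum_adj:
  "bipartite_graph V E \<longleftrightarrow> (\<exists>S. \<forall>i j. enum_adj V E i j \<longrightarrow> (i \<in> S \<longleftrightarrow> j \<notin> S))"
proof
  assume "bipartite_graph V E"
  then obtain A where "\<forall>u v. E u v \<longrightarrow> (u \<in> A \<longleftrightarrow> v \<notin> A)" unfolding bipartite_graph_def by blast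
  then show "\<exists>S. \<forall>i j. enum_adj V E i j \<longrightarrow> (i \<in> S \<longleftrightarrow> j \<notin> S)"
    by (intro exI[of _ "{i. vertex_list V ! i \<in> A}"]) (auto simp: enum_adj_def)
next
  assume "\<exists>S. \<forall>i j. enum_adj V E i j \<longrightarrow> (i \<in> S \<longleftrightarrow> j \<notin> S)"
  then obtain S where S: "\<And>i j. enum_adj V E i j \<Longrightarrow> i \<in> S \<longleftrightarrow> j \<notin> S" by blast
  define A where "A = (!) (vertex_list V) ` (S \<inter> {..<card V})"
  have A: "vertex_list V ! i \<in> A \<longleftrightarrow> i \<in> S" if "i < card V" for i
    using that vertex_list_nth_eq_iff unfolding A_def by auto
  have "E u v \<Longrightarrow> u \<in> A \<longleftrightarrow> v \<notin> A" for u v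
    using vertex_list_surj adj_simple[of u v] A S unfolding enum_adj_def by metis
  moreover have "A \<subseteq> V" unfolding A_def by auto
  ultimately show "bipartite_graph V E" unfolding bipartite_graph_def by blast
qed

lemma connected_index_graph_enum_adj:
  assumes "connected_graph V E" and "2 \<le> card V"
  shows "connected_index_graph (card V) (enum_adj V E)"
proof -
  interpret index_graph "card V" "enum_adj V E"
    by (rule index_graph_enum_adj) (use degree_pos_if_connected assms in blast)
  show ?thesis
    by unfold_locales (use assms enum_adj_connected in auto)
qed

lemma eig_mult_norm_laplacian_0:
  assumes "connected_graph V E" and "2 \<le> card V"
  shows "eig_mult (norm_laplacian V E) 0 = 1"
  unfolding eig_mult_def norm_laplacian_eq_idx_nlap
  using connected_index_graph.order_char_poly_idx_nlap_0[OF connected_index_graph_enum_adj[OF assms]]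
  .

lemma eig_mult_norm_laplacian_2:
  assumes "connected_graph V E" and "2 \<le> card V"
  shows "eig_mult (norm_laplacian V E) 2 = (if bipartite_graph V E then 1 else 0)"
  unfolding eig_mult_def norm_laplacian_eq_idx_nlap bipartite_graph_iff_enum_adj
  using connected_index_graph.order_char_poly_idx_nlap_2[OF connected_index_graph_enum_adj[OF assms]] .

lemma eigenvalue_norm_laplacian_le_2:
  assumes "\<And>u. u \<in> V \<Longrightarrow> 0 < degree V E u" and "eigenvalue (norm_laplacian V E) x"
  shows "x \<le> 2"
proof -
  interpret index_graph "card V" "enum_adj V E" by (rule index_graph_enum_adj) (rule assms(1))
  show ?thesis using eigenvalue_le_2 assms(2) unfolding norm_laplacian_eq_idx_nlap .
qed


lemma finite_graph_edges: "finite (graph_edges V E)"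
proof -
  have "graph_edges V E \<subseteq> Pow V" unfolding graph_edges_def by auto
  then show ?thesis using finite_vertices finite_subset by blast
qed

lemma graph_edge_at:
  assumes "e \<in> graph_edges V E" and "u \<in> e"
  obtains v where "e = {u, v}" "E u v"
  using assms adj_simple unfolding graph_edges_def by (auto simp: insert_commute)

lemma graph_edge_card: "e \<in> graph_edges V E \<Longrightarrow> card e = 2 \<and> e \<subseteq> V"
  unfolding graph_edges_def using adj_simple by auto

lemma card_graph_edges_at:
  assumes u: "u \<in> V"
  shows "card {e \<in> graph_edges V E. u \<in> e} = degree V E u"
proof -
  have "bij_betw (\<lambda>v. {u, v}) {v \<in> V. E u v} {e \<in> graph_edges V E. u \<in> e}"
  proof (rule bij_betwI')
    show "{u, v} = {u, w} \<longleftrightarrow> v = w" if "v \<in> {v \<in> V. E u v}" "w \<in> {v \<in> V. E u v}" for v w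
      using that adj_simple by (auto simp: doubleton_eq_iff)
    show "{u, v} \<in> {e \<in> graph_edges V E. u \<in> e}" if "v \<in> {v \<in> V. E u v}" for v
      using that u unfolding graph_edges_def by auto
    show "\<exists>v\<in>{v \<in> V. E u v}. e = {u, v}" if "e \<in> {e \<in> graph_edges V E. u \<in> e}" for e
      using that graph_edge_at adj_simple by (metis (no_types, lifting) mem_Collect_eq)
  qed
  then show ?thesis unfolding degree_def by (simp add: bij_betw_same_card)
qed

lemma card_graph_edges_through:
  assumes "u \<noteq> u'"
  shows "card {e \<in> graph_edges V E. u \<in> e \<and> u' \<in> e} = (if E u u' then 1 else 0)"
proof -
  have "{e \<in> graph_edges V E. u \<in> e \<and> u' \<in> e} = (if E u u' then {{u, u'}} else {})"
    using assms adj_simple graph_edge_at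
    unfolding graph_edges_def by (auto simp: doubleton_eq_iff)
  then show ?thesis by simp
qed

end

section \<open>The k-parallel subdivision\<close>

lemma mult_inverse_sqrt_scaled:
  fixes k d d' :: real
  assumes "0 < k"
  shows "k * (1 / sqrt (2 * k * d) * (1 / sqrt (2 * k * d'))) = 1 / (2 * sqrt (d * d'))"
proof -
  have "sqrt (2 * k * d) * sqrt (2 * k * d') = sqrt ((2 * k)\<^sup>2 * (d * d'))"
    by (simp add: real_sqrt_mult[symmetric] power2_eq_square ac_simps)
  also have "\<dots> = 2 * k * sqrt (d * d')" using assms by (simp add: real_sqrt_mult)
  finally show ?thesis using assms by simp
qed

definition subdiv_enum :: "nat \<Rightarrow> 'v set \<Rightarrow> ('v \<Rightarrow> 'v \<Rightarrow> bool) \<Rightarrow> ('v + 'v set \<times> nat) list" where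
  "subdiv_enum k V E = map Inl (vertex_list V) @ map Inr (vertex_list (graph_edges V E \<times> {1..k}))"

definition subdiv_incidence :: "nat \<Rightarrow> 'v set \<Rightarrow> ('v \<Rightarrow> 'v \<Rightarrow> bool) \<Rightarrow> real mat" where
  "subdiv_incidence k V E =
     (let vs = vertex_list V; es = vertex_list (graph_edges V E \<times> {1..k})
      in mat (length vs) (length es) (\<lambda>(i, j).
           if vs ! i \<in> fst (es ! j) then 1 / sqrt (2 * real k * real (degree V E (vs ! i))) else 0))"

context fin_simple_graph
begin

lemma degree_subdiv_Inl:
  assumes u: "u \<in> V"
  shows "degree (subdiv_vertices k V E) (subdiv_adj k V E) (Inl u) = k * degree V E u"
proof -
  have "{s \<in> subdiv_vertices k V E. subdiv_adj k V E (Inl u) s}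
      = Inr ` ({e \<in> graph_edges V E. u \<in> e} \<times> {1..k})"
    using u by (auto simp: subdiv_vertices_def elim: subdiv_adj.elims)
  then show ?thesis
    unfolding degree_def[of "subdiv_vertices k V E"] using card_graph_edges_at[OF u]
    by (simp add: card_image card_cartesian_product)
qed

lemma degree_subdiv_Inr:
  assumes "e \<in> graph_edges V E" and "l \<in> {1..k}"
  shows "degree (subdiv_vertices k V E) (subdiv_adj k V E) (Inr (e, l)) = 2"
proof -
  have "{s \<in> subdiv_vertices k V E. subdiv_adj k V E (Inr (e, l)) s} = Inl ` e"
    using assms graph_edge_card[OF assms(1)]
    by (auto simp: subdiv_vertices_def elim: subdiv_adj.elims)
  then show ?thesis
    unfolding degree_def using graph_edge_card[OF assms(1)] by (simp add: card_image)
qed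

lemma sum_subdiv_edges_incident:
  "(\<Sum>z\<in>graph_edges V E \<times> {1..k}. (if u \<in> fst z then a else 0) * (if u' \<in> fst z then b else 0))
     = card {e \<in> graph_edges V E. u \<in> e \<and> u' \<in> e} * (real k * (a * b))"
proof -
  have "(\<Sum>z\<in>graph_edges V E \<times> {1..k}. (if u \<in> fst z then a else 0) * (if u' \<in> fst z then b else 0))
      = (\<Sum>z\<in>graph_edges V E \<times> {1..k}. if u \<in> fst z \<and> u' \<in> fst z then a * b else 0)"
    by (rule sum.cong) auto
  also have "\<dots> = (\<Sum>z\<in>{z \<in> graph_edges V E \<times> {1..k}. u \<in> fst z \<and> u' \<in> fst z}. a * b)"
    by (intro sum.inter_filter[symmetric]) (simp add: finite_graph_edges)
  also have "{z \<in> graph_edges V E \<times> {1..k}. u \<in> fst z \<and> u' \<in> fst z}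
      = {e \<in> graph_edges V E. u \<in> e \<and> u' \<in> e} \<times> {1..k}"
    by auto
  finally show ?thesis by (simp add: card_cartesian_product)
qed

lemma subdiv_incidence_mult_transpose:
  assumes deg: "\<And>u. u \<in> V \<Longrightarrow> 0 < degree V E u" and k: "0 < k"
  shows "subdiv_incidence k V E * transpose_mat (subdiv_incidence k V E)
       = 1\<^sub>m (card V) - (1 / 2) \<cdot>\<^sub>m norm_laplacian V E"
proof (rule eq_matI)
  let ?vs = "vertex_list V" and ?es = "vertex_list (graph_edges V E \<times> {1..k})"
  let ?B = "subdiv_incidence k V E"
  define c where "c u = 1 / sqrt (2 * real k * real (degree V E u))" for u
  have es: "distinct ?es" "set ?es = graph_edges V E \<times> {1..k}"
    using vertex_list[of "graph_edges V E \<times> {1..k}"] finite_graph_edges by auto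
  fix i i' assume "i < dim_row (1\<^sub>m (card V) - (1 / 2) \<cdot>\<^sub>m norm_laplacian V E)"
    "i' < dim_col (1\<^sub>m (card V) - (1 / 2) \<cdot>\<^sub>m norm_laplacian V E)"
  then have i: "i < card V" "i' < card V" by (simp_all add: norm_laplacian_eq_idx_nlap)
  define u u' where "u = ?vs ! i" and "u' = ?vs ! i'"
  have u: "u \<in> V" "u' \<in> V" using i by (simp_all add: u_def u'_def vertex_list_nth_in)
  define f :: "'v set \<times> nat \<Rightarrow> real"
    where "f z = (if u \<in> fst z then c u else 0) * (if u' \<in> fst z then c u' else 0)" for z
  have "(?B * transpose_mat ?B) $$ (i, i') = (\<Sum>j<length ?es. f (?es ! j))"
    unfolding f_def c_def u_def u'_def using i
    by (simp add: subdiv_incidence_def Let_def scalar_prod_def vertex_list finite_vertices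
        lessThan_atLeast0)
  also have "\<dots> = (\<Sum>z\<in>graph_edges V E \<times> {1..k}. f z)"
    using sum.distinct_set_conv_list[OF es(1), of f] es(2)
    by (simp add: sum_list_sum_nth lessThan_atLeast0)
  also have "\<dots> = card {e \<in> graph_edges V E. u \<in> e \<and> u' \<in> e} * (real k * (c u * c u'))"
    unfolding f_def by (rule sum_subdiv_edges_incident)
  also have "real k * (c u * c u') = 1 / (2 * sqrt (real (degree V E u) * real (degree V E u')))"
    unfolding c_def by (rule mult_inverse_sqrt_scaled) (use k in simp)
  finally show "(?B * transpose_mat ?B) $$ (i, i')
      = (1\<^sub>m (card V) - (1 / 2) \<cdot>\<^sub>m norm_laplacian V E) $$ (i, i')"
    using i u deg[OF u(1)] card_graph_edges_at[OF u(1)] card_graph_edges_through[of u u']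
    by (auto simp: norm_laplacian_def Let_def vertex_list finite_vertices nlap_entry_def
        u_def u'_def vertex_list_nth_eq_iff real_sqrt_mult_self)
qed (simp_all add: subdiv_incidence_def Let_def vertex_list finite_vertices norm_laplacian_eq_idx_nlap)


lemma finite_subdiv_vertices: "finite (subdiv_vertices k V E)"
  unfolding subdiv_vertices_def using finite_vertices finite_graph_edges by simp

lemma nlap_entry_subdiv_Inl_Inl:
  "nlap_entry (subdiv_vertices k V E) (subdiv_adj k V E) (Inl a) (Inl b) = (if a = b then 1 else 0)"
  unfolding nlap_entry_def by simp

lemma nlap_entry_subdiv_Inr_Inr:
  "nlap_entry (subdiv_vertices k V E) (subdiv_adj k V E) (Inr z) (Inr z') = (if z = z' then 1 else 0)"
  unfolding nlap_entry_def by (cases z; cases z') simp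

lemma nlap_entry_subdiv_Inl_Inr:
  assumes u: "u \<in> V" and z: "z \<in> graph_edges V E \<times> {1..k}"
  shows "nlap_entry (subdiv_vertices k V E) (subdiv_adj k V E) (Inl u) (Inr z)
       = - (if u \<in> fst z then 1 / sqrt (2 * real k * real (degree V E u)) else 0)"
    and "nlap_entry (subdiv_vertices k V E) (subdiv_adj k V E) (Inr z) (Inl u)
       = - (if u \<in> fst z then 1 / sqrt (2 * real k * real (degree V E u)) else 0)"
  using z u degree_subdiv_Inl[OF u, where k = k] degree_subdiv_Inr[where k = k]
  by (auto simp: nlap_entry_def ac_simps)

lemma subdiv_enum:
  "distinct (subdiv_enum k V E)" "set (subdiv_enum k V E) = subdiv_vertices k V E"
  "length (subdiv_enum k V E) = card V + k * card (graph_edges V E)"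
  using vertex_list[OF finite_vertices] vertex_list[of "graph_edges V E \<times> {1..k}"] finite_graph_edges
  by (auto simp: subdiv_enum_def subdiv_vertices_def distinct_map card_cartesian_product)

lemma subdiv_incidence_carrier:
  "subdiv_incidence k V E \<in> carrier_mat (card V) (k * card (graph_edges V E))"
  using vertex_list(3)[OF finite_vertices] vertex_list(3)[of "graph_edges V E \<times> {1..k}"] finite_graph_edges
  by (simp add: subdiv_incidence_def Let_def card_cartesian_product mult.commute)

lemma norm_laplacian_subdiv_block:
  fixes k :: nat
  defines "B \<equiv> subdiv_incidence k V E" and "N \<equiv> card V + k * card (graph_edges V E)"
  shows "mat N N (\<lambda>(i, j). nlap_entry (subdiv_vertices k V E) (subdiv_adj k V E)
             (subdiv_enum k V E ! i) (subdiv_enum k V E ! j))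
       = four_block_mat (1\<^sub>m (card V)) (- B) (- transpose_mat B) (1\<^sub>m (k * card (graph_edges V E)))"
proof -
  let ?SV = "subdiv_vertices k V E" and ?SA = "subdiv_adj k V E"
  let ?n = "card V" and ?p = "k * card (graph_edges V E)"
  define vs where "vs = vertex_list V"
  define es where "es = vertex_list (graph_edges V E \<times> {1..k})"
  have vs: "distinct vs" "set vs = V" "length vs = ?n"
    using vertex_list finite_vertices unfolding vs_def by auto
  have es: "distinct es" "set es = graph_edges V E \<times> {1..k}" "length es = ?p"
    using vertex_list[of "graph_edges V E \<times> {1..k}"] finite_graph_edges
    unfolding es_def by (auto simp: card_cartesian_product)
  have enum_nth: "subdiv_enum k V E ! i = (if i < ?n then Inl (vs ! i) else Inr (es ! (i - ?n)))"
    if "i < ?n + ?p" for i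
    using that vs es unfolding subdiv_enum_def vs_def[symmetric] es_def[symmetric] by (simp add: nth_append)
  have B: "B = mat ?n ?p (\<lambda>(i, j).
      if vs ! i \<in> fst (es ! j) then 1 / sqrt (2 * real k * real (degree V E (vs ! i))) else 0)"
    unfolding B_def subdiv_incidence_def Let_def vs_def[symmetric] es_def[symmetric] vs(3) es(3) ..
  have cross: "nlap_entry ?SV ?SA (Inl (vs ! i)) (Inr (es ! j)) = - B $$ (i, j)"
    "nlap_entry ?SV ?SA (Inr (es ! j)) (Inl (vs ! i)) = - B $$ (i, j)" if "i < ?n" "j < ?p" for i j
  proof -
    have "vs ! i \<in> V" "es ! j \<in> graph_edges V E \<times> {1..k}" using that vs es nth_mem by metis+
    from nlap_entry_subdiv_Inl_Inr[OF this]
    show "nlap_entry ?SV ?SA (Inl (vs ! i)) (Inr (es ! j)) = - B $$ (i, j)"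
      "nlap_entry ?SV ?SA (Inr (es ! j)) (Inl (vs ! i)) = - B $$ (i, j)"
      using that by (simp_all add: B)
  qed
  show ?thesis
    by (rule eq_matI) (auto simp: N_def B enum_nth cross nlap_entry_subdiv_Inl_Inl
        nlap_entry_subdiv_Inr_Inr nth_eq_iff_index_eq vs es)
qed

lemma poly_char_poly_subdiv:
  fixes k :: nat and x :: real
  defines "B \<equiv> subdiv_incidence k V E"
  shows "poly (char_poly (norm_laplacian (subdiv_vertices k V E) (subdiv_adj k V E))) x
       = det (four_block_mat ((x - 1) \<cdot>\<^sub>m 1\<^sub>m (card V)) B (transpose_mat B)
           ((x - 1) \<cdot>\<^sub>m 1\<^sub>m (k * card (graph_edges V E))))"
proof -
  let ?SV = "subdiv_vertices k V E" and ?SA = "subdiv_adj k V E"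
  let ?vS = "vertex_list ?SV" and ?e = "subdiv_enum k V E"
  let ?n = "card V" and ?p = "k * card (graph_edges V E)"
  define g where "g a b = (if a = b then x else 0) - nlap_entry ?SV ?SA a b" for a b
  have vS: "distinct ?vS" "set ?vS = ?SV" using vertex_list[OF finite_subdiv_vertices] by auto
  have B: "B \<in> carrier_mat ?n ?p" unfolding B_def by (rule subdiv_incidence_carrier)
  have "poly (char_poly (norm_laplacian ?SV ?SA)) x
      = det (x \<cdot>\<^sub>m 1\<^sub>m (length ?vS) - norm_laplacian ?SV ?SA)"
    by (rule poly_char_poly_eq_det) (simp add: norm_laplacian_def Let_def)
  also have "x \<cdot>\<^sub>m 1\<^sub>m (length ?vS) - norm_laplacian ?SV ?SA
      = mat (length ?vS) (length ?vS) (\<lambda>(i, j). g (?vS ! i) (?vS ! j))"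
    by (rule eq_matI) (auto simp: norm_laplacian_def Let_def g_def nth_eq_iff_index_eq[OF vS(1)])
  also have "det \<dots> = det (mat (length ?e) (length ?e) (\<lambda>(i, j). g (?e ! i) (?e ! j)))"
    using vS subdiv_enum by (intro det_mat_enumeration_invariant) auto
  also have "mat (length ?e) (length ?e) (\<lambda>(i, j). g (?e ! i) (?e ! j))
      = x \<cdot>\<^sub>m 1\<^sub>m (?n + ?p) - mat (?n + ?p) (?n + ?p) (\<lambda>(i, j). nlap_entry ?SV ?SA (?e ! i) (?e ! j))"
    by (rule eq_matI) (auto simp: g_def subdiv_enum nth_eq_iff_index_eq[OF subdiv_enum(1)])
  also have "\<dots> = four_block_mat ((x - 1) \<cdot>\<^sub>m 1\<^sub>m ?n) B (transpose_mat B) ((x - 1) \<cdot>\<^sub>m 1\<^sub>m ?p)"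
    unfolding norm_laplacian_subdiv_block B_def[symmetric] using B by (intro eq_matI) auto
  finally show ?thesis .
qed

lemma char_poly_subdiv:
  assumes deg: "\<And>u. u \<in> V \<Longrightarrow> 0 < degree V E u" and k: "0 < k"
  shows "char_poly (norm_laplacian (subdiv_vertices k V E) (subdiv_adj k V E)) * [:-1, 1:] ^ card V
       = [:-1, 1:] ^ (k * card (graph_edges V E))
         * Polynomial.smult ((-1 / 2) ^ card V) (char_poly (norm_laplacian V E) \<circ>\<^sub>p [:0, 4, -2:])"
proof (rule poly_ext)
  fix x :: real
  let ?B = "subdiv_incidence k V E" and ?LG = "norm_laplacian V E"
  let ?n = "card V" and ?p = "k * card (graph_edges V E)"
  have B: "?B \<in> carrier_mat ?n ?p" by (rule subdiv_incidence_carrier)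
  have LG: "?LG \<in> carrier_mat ?n ?n" by (simp add: norm_laplacian_eq_idx_nlap)
  have BBt: "?B * transpose_mat ?B = 1\<^sub>m ?n - (1 / 2) \<cdot>\<^sub>m ?LG"
    by (rule subdiv_incidence_mult_transpose[OF deg k])
  have "((x - 1) * (x - 1)) \<cdot>\<^sub>m 1\<^sub>m ?n - ?B * transpose_mat ?B
      = (- 1 / 2) \<cdot>\<^sub>m ((4 * x - 2 * x\<^sup>2) \<cdot>\<^sub>m 1\<^sub>m ?n - ?LG)"
    unfolding BBt using LG by (intro eq_matI) (auto simp: algebra_simps power2_eq_square)
  then have "det (((x - 1) * (x - 1)) \<cdot>\<^sub>m 1\<^sub>m ?n - ?B * transpose_mat ?B)
      = (- 1 / 2) ^ ?n * poly (char_poly ?LG) (4 * x - 2 * x\<^sup>2)"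
    using LG by (simp add: poly_char_poly_eq_det[OF LG])
  then show "poly (char_poly (norm_laplacian (subdiv_vertices k V E) (subdiv_adj k V E)) * [:-1, 1:] ^ ?n) x
      = poly ([:-1, 1:] ^ ?p * Polynomial.smult ((-1 / 2) ^ ?n) (char_poly ?LG \<circ>\<^sub>p [:0, 4, -2:])) x"
    using det_four_block_scalar_diag[OF B, of "x - 1"]
    by (simp add: poly_char_poly_subdiv poly_pcompose power2_eq_square algebra_simps)
qed

lemma eig_mult_subdiv:
  fixes a :: real
  assumes deg: "\<And>u. u \<in> V \<Longrightarrow> 0 < degree V E u" and k: "0 < k"
  shows "eig_mult (norm_laplacian (subdiv_vertices k V E) (subdiv_adj k V E)) a
         + (if a = 1 then card V else 0)
       = (if a = 1 then k * card (graph_edges V E) else 0)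
         + eig_mult (norm_laplacian V E) (4 * a - 2 * a\<^sup>2) * (if a = 1 then 2 else 1)"
proof -
  let ?cS = "char_poly (norm_laplacian (subdiv_vertices k V E) (subdiv_adj k V E))"
  let ?cG = "char_poly (norm_laplacian V E)" and ?Q = "[:0, 4, -2 :: real:]"
  let ?n = "card V" and ?p = "k * card (graph_edges V E)"
  have cS: "?cS \<noteq> 0" and cG: "?cG \<noteq> 0"
    by (rule char_poly_nonzero[OF norm_laplacian_carrier])+
  have cGQ: "?cG \<circ>\<^sub>p ?Q \<noteq> 0" using cG pcompose_eq_0_iff[of ?Q ?cG] by simp
  have "Polynomial.order a ?cS + (if a = 1 then ?n else 0)
      = Polynomial.order a (?cS * [:-1, 1:] ^ ?n)"
    using cS by (subst order_mult) (auto simp: order_linear_power)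
  also have "\<dots> = Polynomial.order a ([:-1, 1:] ^ ?p * Polynomial.smult ((-1 / 2) ^ ?n) (?cG \<circ>\<^sub>p ?Q))"
    using char_poly_subdiv[OF deg k] by (rule arg_cong)
  also have "\<dots> = (if a = 1 then ?p else 0) + Polynomial.order a (?cG \<circ>\<^sub>p ?Q)"
    using cGQ by (subst order_mult) (auto simp: order_linear_power order_smult)
  also have "Polynomial.order a (?cG \<circ>\<^sub>p ?Q)
      = Polynomial.order (poly ?Q a) ?cG * Polynomial.order a (?Q - [:poly ?Q a:])"
    by (rule order_pcompose[OF cG]) simp
  also have "Polynomial.order a (?Q - [:poly ?Q a:]) = (if a = 1 then 2 else 1)"
    by (rule order_quadratic_minus_value)
  also have "poly ?Q a = 4 * a - 2 * a\<^sup>2" by (simp add: algebra_simps power2_eq_square)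
  finally show ?thesis unfolding eig_mult_def .
qed

end

lemma f1_f2_roots:
  assumes "x < 2"
  shows "4 * f1 x - 2 * (f1 x)\<^sup>2 = x" "4 * f2 x - 2 * (f2 x)\<^sup>2 = x" "f1 x \<noteq> 1" "f2 x \<noteq> 1"
proof -
  define s where "s = sqrt (4 - 2 * x)"
  have s: "0 < s" "s\<^sup>2 = 4 - 2 * x" using assms unfolding s_def by simp_all
  show "4 * f1 x - 2 * (f1 x)\<^sup>2 = x" "4 * f2 x - 2 * (f2 x)\<^sup>2 = x"
    unfolding f1_def f2_def s_def[symmetric] using s(2)
    by (simp_all add: power2_eq_square field_simps)
  show "f1 x \<noteq> 1" "f2 x \<noteq> 1"
    unfolding f1_def f2_def s_def[symmetric] using s(1) by simp_all
qed

theorem theorem1p1: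
  fixes V :: "'v set" and E :: "'v \<Rightarrow> 'v \<Rightarrow> bool" and k :: nat
  assumes "simple_graph V E" and "connected_graph V E" and "card V \<ge> 2" and "k \<ge> 1"
  defines "n \<equiv> card V" and "m \<equiv> card (graph_edges V E)"
    and "LG \<equiv> norm_laplacian V E"
    and "LS \<equiv> norm_laplacian (subdiv_vertices k V E) (subdiv_adj k V E)"
  shows "(\<forall>x. eigenvalue LG x \<and> x \<notin> {0, 2} \<longrightarrow>
            eigenvalue LS (f1 x) \<and> eigenvalue LS (f2 x) \<and>
            eig_mult LS (f1 x) = eig_mult LG x \<and> eig_mult LS (f2 x) = eig_mult LG x)
       \<and> (eigenvalue LS 0 \<and> eig_mult LS 0 = 1 \<and> eigenvalue LS 2 \<and> eig_mult LS 2 = 1)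
       \<and> int (eig_mult LS 1) =
           (if bipartite_graph V E then int k * int m - int n + 2 else int k * int m - int n)"
proof -
  interpret fin_simple_graph V E by (rule fin_simple_graph.intro) (rule assms(1))
  have deg: "\<And>u. u \<in> V \<Longrightarrow> 0 < degree V E u"
    using degree_pos_if_connected[OF assms(2,3)] .
  have mult: "eig_mult LS a + (if a = 1 then n else 0)
      = (if a = 1 then k * m else 0) + eig_mult LG (4 * a - 2 * a\<^sup>2) * (if a = 1 then 2 else 1)" for a
    unfolding LS_def LG_def n_def m_def using eig_mult_subdiv[OF deg] assms(4) by simp
  have evS: "eigenvalue LS a \<longleftrightarrow> 0 < eig_mult LS a"
    and evG: "eigenvalue LG a \<longleftrightarrow> 0 < eig_mult LG a" for a
    unfolding LS_def LG_def by (rule eigenvalue_iff_eig_mult_pos[OF norm_laplacian_carrier])+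
  have G0: "eig_mult LG 0 = 1" and G2: "eig_mult LG 2 = (if bipartite_graph V E then 1 else 0)"
    unfolding LG_def using eig_mult_norm_laplacian_0 eig_mult_norm_laplacian_2 assms(2,3) by blast+
  have "eigenvalue LS (f1 x) \<and> eigenvalue LS (f2 x) \<and>
      eig_mult LS (f1 x) = eig_mult LG x \<and> eig_mult LS (f2 x) = eig_mult LG x"
    if x: "eigenvalue LG x" "x \<notin> {0, 2}" for x
  proof -
    have "x < 2"
      using x eigenvalue_norm_laplacian_le_2[OF deg] unfolding LG_def by fastforce
    then show ?thesis using f1_f2_roots mult[of "f1 x"] mult[of "f2 x"] evS evG x(1) by auto
  qed
  moreover have "eig_mult LS 0 = 1" "eig_mult LS 2 = 1" using mult[of 0] mult[of 2] G0 by simp_all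
  moreover have "int (eig_mult LS 1) = int k * int m - int n + 2 * int (eig_mult LG 2)"
    using arg_cong[OF mult[of 1], of int] by simp
  ultimately show ?thesis using evS evG G2 by auto
qed

end
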